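(* Let $k,l\geq0$ be integers and $X,Y,Z,V$ be $N\times N$ real symmetric positive semidefinite matrices. Then, in the Löwner order, \[ X^{k}\otimes V\otimes X^{l}+(X+Y+Z)^{k}\otimes V\otimes(X+Y+Z)^{l}\geq(X+Y)^{k}\otimes V\otimes(X+Y)^{l}+(X+Z)^{k}\otimes V\otimes(X+Z)^{l}. \]
   Context: Notation: for a matrix $W$ and $j\geq1$, $W^{j}$ denotes the $j$-fold tensor (Kronecker) power $W\otimes\cdots\otimes W$, and $W^{0}=1$ (the scalar one, so that tensoring with $W^{0}$ leaves a factor unchanged). The Löwner order: $S\leq T$ iff $T-S$ is positive semidefinite. *)

theory Defs
  imports "Jordan_Normal_Form.Matrix"
begin

definition kron :: "'a::semiring_1 mat \<Rightarrow> 'a mat \<Rightarrow> 'a mat" where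
  "kron A B = mat (dim_row A * dim_row B) (dim_col A * dim_col B)
     (\<lambda>(i,j). A $$ (i div dim_row B, j div dim_col B) * B $$ (i mod dim_row B, j mod dim_col B))"

fun kron_pow :: "'a::semiring_1 mat \<Rightarrow> nat \<Rightarrow> 'a mat" where
  "kron_pow W 0 = 1\<^sub>m 1"
| "kron_pow W (Suc j) = kron W (kron_pow W j)"

definition psd :: "real mat \<Rightarrow> bool" where
  "psd A \<longleftrightarrow> dim_row A = dim_col A \<and> transpose_mat A = A \<and>
     (\<forall>v \<in> carrier_vec (dim_row A). v \<bullet> (A *\<^sub>v v) \<ge> 0)"

definition loewner_le :: "real mat \<Rightarrow> real mat \<Rightarrow> bool" where
  "loewner_le S T \<longleftrightarrow> dim_row S = dim_row T \<and> dim_col S = dim_col T \<and> psd (T - S)"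

end

theory Submission
  imports Defs "HOL-Library.Function_Algebras"
begin

text \<open>Call a map \<open>F\<close> on psd \<open>N \<times> N\<close> matrices monotone supermodular if it is psd-valued,
  \<open>F X \<le> F (X + Y)\<close> and \<open>F (X + Y) + F (X + Z) \<le> F X + F (X + Y + Z)\<close>; the theorem says that
  \<open>A \<mapsto> A\<^sup>k \<otimes> V \<otimes> A\<^sup>l\<close> is such a map. The identity and the constants are, and the class is closed
  under \<open>F, G \<mapsto> F \<otimes> G\<close>: writing \<open>a, b, c, d\<close> for \<open>F\<close> at \<open>X, X + Y, X + Z, X + Y + Z\<close>,
  likewise \<open>a', b', c', d'\<close> for \<open>G\<close>, and \<open>\<Delta> = a + d - b - c\<close>,
  \<open>a \<otimes> a' + d \<otimes> d' - b \<otimes> b' - c \<otimes> c' = a \<otimes> \<Delta>' + (b - a) \<otimes> (c' - a') + (b - a) \<otimes> \<Delta>'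
    + (c - a) \<otimes> (b' - a') + (c - a) \<otimes> \<Delta>' + \<Delta> \<otimes> d'\<close>,
  a sum of Kronecker products of psd matrices, which are psd by the Schur product theorem.\<close>

definition quad_form :: "'a set \<Rightarrow> ('a \<Rightarrow> 'a \<Rightarrow> real) \<Rightarrow> ('a \<Rightarrow> real) \<Rightarrow> real" where
  "quad_form S A x = (\<Sum>i\<in>S. \<Sum>j\<in>S. x i * A i j * x j)"

text \<open>Matrices are handled as arrays \<open>'a \<Rightarrow> 'a \<Rightarrow> real\<close> on an index set, so that sums, differences
  and Kronecker products become pointwise operations on functions (the ring structure of
  \<^theory>\<open>HOL-Library.Function_Algebras\<close>).\<close>

definition psd_on :: "'a set \<Rightarrow> ('a \<Rightarrow> 'a \<Rightarrow> real) \<Rightarrow> bool" where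
  "psd_on S A \<longleftrightarrow> (\<forall>i\<in>S. \<forall>j\<in>S. A i j = A j i) \<and> (\<forall>x. 0 \<le> quad_form S A x)"

lemma psd_onI:
  assumes "\<And>i j. i \<in> S \<Longrightarrow> j \<in> S \<Longrightarrow> A i j = A j i" and "\<And>x. 0 \<le> quad_form S A x"
  shows "psd_on S A"
  using assms unfolding psd_on_def by blast

lemma psd_on_sym: "psd_on S A \<Longrightarrow> i \<in> S \<Longrightarrow> j \<in> S \<Longrightarrow> A i j = A j i"
  unfolding psd_on_def by blast

lemma psd_on_quad_form_nonneg: "psd_on S A \<Longrightarrow> 0 \<le> quad_form S A x"
  unfolding psd_on_def by blast

lemma psd_on_cong:
  assumes "\<And>i j. i \<in> S \<Longrightarrow> j \<in> S \<Longrightarrow> A i j = B i j"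
  shows "psd_on S A \<longleftrightarrow> psd_on S B"
proof -
  have "quad_form S A = quad_form S B"
    unfolding quad_form_def fun_eq_iff using assms by simp
  then show ?thesis
    unfolding psd_on_def using assms by auto
qed

lemma quad_form_zero [simp]: "quad_form S A (\<lambda>_. 0) = 0"
  by (simp add: quad_form_def)

lemma quad_form_add: "quad_form S (A + B) x = quad_form S A x + quad_form S B x"
  by (simp add: quad_form_def distrib_left distrib_right sum.distrib)

lemma psd_on_add: "psd_on S A \<Longrightarrow> psd_on S B \<Longrightarrow> psd_on S (A + B)"
  by (auto simp: psd_on_def quad_form_add add_nonneg_nonneg)

lemma psd_on_zero: "psd_on S 0"
  by (simp add: psd_on_def quad_form_def)

lemma psd_on_subset:
  assumes "finite S" "psd_on S A" "T \<subseteq> S"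
  shows "psd_on T A"
proof (rule psd_onI)
  show "A i j = A j i" if "i \<in> T" "j \<in> T" for i j
    using assms(3) that by (intro psd_on_sym[OF assms(2)]) auto
  fix x :: "'a \<Rightarrow> real"
  define y where "y i = (if i \<in> T then x i else 0)" for i
  have "(\<Sum>j\<in>S. y i * A i j * y j) = (\<Sum>j\<in>T. x i * A i j * x j)" if "i \<in> T" for i
    using assms(1,3) that by (intro sum.mono_neutral_cong_right) (auto simp: y_def)
  then have "quad_form S A y = quad_form T A x"
    using assms(1,3) unfolding quad_form_def by (intro sum.mono_neutral_cong_right) (auto simp: y_def)
  then show "0 \<le> quad_form T A x"
    using psd_on_quad_form_nonneg[OF assms(2), of y] by simp
qed

lemma sum_delta_mult:
  assumes "finite S" "s \<in> S"
  shows "(\<Sum>i\<in>S. (if i = s then t else 0) * g i) = (t::real) * g s"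
proof -
  have "(\<Sum>i\<in>S. (if i = s then t else 0) * g i) = (\<Sum>i\<in>S. if i = s then t * g s else 0)"
    by (rule sum.cong) auto
  then show ?thesis
    using assms by simp
qed

lemma quad_form_add_unit:
  assumes "finite S" "s \<in> S" and sym: "\<forall>i\<in>S. \<forall>j\<in>S. A i j = A j i"
  shows "quad_form S A (\<lambda>i. x i + (if i = s then t else 0))
    = quad_form S A x + 2 * t * (\<Sum>j\<in>S. A s j * x j) + t\<^sup>2 * A s s"
proof -
  let ?e = "\<lambda>i. if i = s then t else 0"
  have "(x i + ?e i) * A i j * (x j + ?e j)
      = x i * A i j * x j + ?e i * (A i j * x j) + ?e j * (x i * A i j) + ?e i * (?e j * A i j)" for i j
    by (simp add: algebra_simps)
  then have "quad_form S A (\<lambda>i. x i + ?e i) = quad_form S A x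
      + (\<Sum>i\<in>S. \<Sum>j\<in>S. ?e i * (A i j * x j)) + (\<Sum>i\<in>S. \<Sum>j\<in>S. ?e j * (x i * A i j))
      + (\<Sum>i\<in>S. \<Sum>j\<in>S. ?e i * (?e j * A i j))"
    unfolding quad_form_def by (simp add: sum.distrib)
  also have "(\<Sum>i\<in>S. \<Sum>j\<in>S. ?e i * (A i j * x j)) = t * (\<Sum>j\<in>S. A s j * x j)"
    using assms by (simp add: sum_delta_mult sum_distrib_left[symmetric])
  also have "(\<Sum>i\<in>S. \<Sum>j\<in>S. ?e j * (x i * A i j)) = (\<Sum>i\<in>S. t * (x i * A i s))"
    using assms by (simp add: sum_delta_mult)
  also have "\<dots> = t * (\<Sum>j\<in>S. A s j * x j)"
    using assms by (simp add: sum_distrib_left mult.commute)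
  also have "(\<Sum>i\<in>S. \<Sum>j\<in>S. ?e i * (?e j * A i j)) = t\<^sup>2 * A s s"
    using assms by (simp add: sum_delta_mult sum_distrib_left[symmetric] power2_eq_square)
  finally show ?thesis
    by simp
qed

lemma psd_on_diag_nonneg:
  assumes "finite S" "psd_on S A" "s \<in> S"
  shows "0 \<le> A s s"
proof -
  have "quad_form S A (\<lambda>i. 0 + (if i = s then 1 else 0)) = A s s"
    using quad_form_add_unit[of S s A "\<lambda>_. 0" 1] assms by (simp add: psd_on_def)
  then show ?thesis
    by (metis psd_on_quad_form_nonneg[OF assms(2)])
qed

lemma psd_on_zero_diag_imp_zero_row:
  assumes fin: "finite S" and psd: "psd_on S A" and s: "s \<in> S" and j: "j \<in> S" and diag: "A s s = 0"
  shows "A s j = 0"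
proof (rule ccontr)
  assume nonzero: "A s j \<noteq> 0"
  have sym: "\<forall>i\<in>S. \<forall>j\<in>S. A i j = A j i"
    using psd by (simp add: psd_on_def)
  define e :: "'a \<Rightarrow> real" where "e = (\<lambda>i. if i = j then 1 else 0)"
  have "(\<Sum>k\<in>S. A s k * e k) = A s j"
    using fin j sum_delta_mult[of S j 1 "A s"] by (simp add: e_def mult.commute)
  moreover have "quad_form S A e = A j j"
    using quad_form_add_unit[of S j A "\<lambda>_. 0" 1] fin j sym by (simp add: e_def)
  ultimately have "quad_form S A (\<lambda>i. e i + (if i = s then t else 0)) = A j j + 2 * t * A s j" for t
    using quad_form_add_unit[of S s A e t] fin s sym diag by simp
  from this[of "- (A j j + 1) / (2 * A s j)"] nonzero
  have "quad_form S A (\<lambda>i. e i + (if i = s then - (A j j + 1) / (2 * A s j) else 0)) = -1"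
    by (simp add: field_simps)
  then show False
    using psd_on_quad_form_nonneg[OF psd] by (smt (verit))
qed

text \<open>If \<open>A s s = 0\<close>, division by zero makes this \<open>A\<close> itself; that case is harmless because
  row and column \<open>s\<close> of a psd \<open>A\<close> with \<open>A s s = 0\<close> vanish.\<close>

definition schur_complement :: "('a \<Rightarrow> 'a \<Rightarrow> real) \<Rightarrow> 'a \<Rightarrow> 'a \<Rightarrow> 'a \<Rightarrow> real" where
  "schur_complement A s i j = A i j - A i s * A s j / A s s"

lemma quad_form_schur_complement:
  assumes sym: "\<forall>i\<in>S. \<forall>j\<in>S. A i j = A j i" and "s \<in> S"
  shows "quad_form S (schur_complement A s) x = quad_form S A x - (\<Sum>j\<in>S. A s j * x j)\<^sup>2 / A s s"
proof -
  have "quad_form S (schur_complement A s) x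
      = quad_form S A x - (\<Sum>i\<in>S. \<Sum>j\<in>S. (x i * A i s) * (A s j * x j)) / A s s"
    unfolding quad_form_def schur_complement_def sum_divide_distrib sum_subtractf[symmetric]
    by (intro sum.cong refl) (simp add: algebra_simps)
  also have "(\<Sum>i\<in>S. \<Sum>j\<in>S. (x i * A i s) * (A s j * x j))
      = (\<Sum>i\<in>S. x i * A i s) * (\<Sum>j\<in>S. A s j * x j)"
    by (simp add: sum_product)
  also have "(\<Sum>i\<in>S. x i * A i s) = (\<Sum>j\<in>S. A s j * x j)"
    using assms by (intro sum.cong) auto
  finally show ?thesis
    by (simp add: power2_eq_square)
qed

lemma psd_on_schur_complement:
  assumes fin: "finite S" and psd: "psd_on S A" and s: "s \<in> S"
  shows "psd_on S (schur_complement A s)"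
proof (rule psd_onI)
  have sym: "\<forall>i\<in>S. \<forall>j\<in>S. A i j = A j i"
    using psd by (simp add: psd_on_def)
  then show "schur_complement A s i j = schur_complement A s j i" if "i \<in> S" "j \<in> S" for i j
    using s that by (simp add: schur_complement_def)
  fix x
  define c where "c = (\<Sum>j\<in>S. A s j * x j)"
  show "0 \<le> quad_form S (schur_complement A s) x"
  proof (cases "A s s = 0")
    case True
    then show ?thesis
      using quad_form_schur_complement[OF sym s] psd_on_quad_form_nonneg[OF psd] by simp
  next
    case False
    \<comment> \<open>the form of the Schur complement is that of \<open>A\<close> minimised along the unit vector at \<open>s\<close>\<close>
    have "quad_form S A (\<lambda>i. x i + (if i = s then - c / A s s else 0))
        = quad_form S A x + 2 * (- c / A s s) * c + (- c / A s s)\<^sup>2 * A s s"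
      using quad_form_add_unit[OF fin s sym] by (simp add: c_def)
    also have "\<dots> = quad_form S (schur_complement A s) x"
      using quad_form_schur_complement[OF sym s] False by (simp add: c_def field_simps power2_eq_square)
    finally show ?thesis
      using psd_on_quad_form_nonneg[OF psd] by (smt (verit))
  qed
qed

lemma schur_complement_eq_0:
  assumes "finite S" "psd_on S A" "s \<in> S" "j \<in> S"
  shows "schur_complement A s s j = 0" "schur_complement A s j s = 0"
proof -
  have "A s j = 0" "A j s = 0" if "A s s = 0"
    using psd_on_zero_diag_imp_zero_row[OF assms(1-4) that] psd_on_sym[OF assms(2,3,4)] by auto
  then show "schur_complement A s s j = 0" "schur_complement A s j s = 0"
    by (auto simp: schur_complement_def)
qed

text \<open>Split \<open>A\<close> into its Schur complement at \<open>s\<close> and the rank-one part \<open>A i s * A s j / A s s\<close>: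
  the latter pairs with \<open>B\<close> to a value of the form of \<open>B\<close>, and the former has vanishing row and
  column \<open>s\<close>, so induction applies to it on the remaining indices.\<close>

lemma psd_on_frobenius_nonneg:
  assumes "finite S" "psd_on S A" "psd_on S B"
  shows "0 \<le> (\<Sum>i\<in>S. \<Sum>j\<in>S. A i j * B i j)"
  using assms
proof (induction S arbitrary: A B rule: finite_induct)
  case empty
  then show ?case
    by simp
next
  case (insert s T)
  let ?S = "insert s T" and ?A' = "schur_complement A s"
  have fin: "finite ?S"
    using insert.hyps by simp
  have psd_A': "psd_on ?S ?A'"
    using psd_on_schur_complement[OF fin insert.prems(1)] by simp
  have "0 \<le> (\<Sum>i\<in>T. \<Sum>j\<in>T. ?A' i j * B i j)"
    using insert.IH psd_on_subset[OF fin psd_A'] psd_on_subset[OF fin insert.prems(2)] by blast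
  also have "\<dots> = (\<Sum>i\<in>?S. \<Sum>j\<in>?S. ?A' i j * B i j)"
    using insert.hyps schur_complement_eq_0[OF fin insert.prems(1) insertI1] by (simp add: sum.insert)
  finally have complement_part: "0 \<le> (\<Sum>i\<in>?S. \<Sum>j\<in>?S. ?A' i j * B i j)" .
  have "(\<Sum>i\<in>?S. \<Sum>j\<in>?S. (A i s * A s j / A s s) * B i j) = quad_form ?S B (\<lambda>i. A i s) / A s s"
    unfolding quad_form_def sum_divide_distrib
  proof (intro sum.cong refl)
    fix i j
    assume "j \<in> ?S"
    then have "A s j = A j s"
      by (rule psd_on_sym[OF insert.prems(1) insertI1])
    then show "A i s * A s j / A s s * B i j = A i s * B i j * A j s / A s s"
      by simp
  qed
  moreover have "0 \<le> quad_form ?S B (\<lambda>i. A i s) / A s s"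
    using psd_on_quad_form_nonneg[OF insert.prems(2)] psd_on_diag_nonneg[OF fin insert.prems(1) insertI1]
    by simp
  ultimately have rank_one_part: "0 \<le> (\<Sum>i\<in>?S. \<Sum>j\<in>?S. (A i s * A s j / A s s) * B i j)"
    by simp
  have "(\<Sum>i\<in>?S. \<Sum>j\<in>?S. A i j * B i j)
      = (\<Sum>i\<in>?S. \<Sum>j\<in>?S. ?A' i j * B i j) + (\<Sum>i\<in>?S. \<Sum>j\<in>?S. (A i s * A s j / A s s) * B i j)"
    unfolding schur_complement_def sum.distrib[symmetric] by (intro sum.cong refl) (simp add: algebra_simps)
  then show ?case
    using complement_part rank_one_part by linarith
qed

lemma sum_lessThan_mult:
  fixes g :: "nat \<Rightarrow> 'a::comm_monoid_add"
  shows "sum g {..<n * m} = (\<Sum>p<n. \<Sum>q<m. g (p * m + q))"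
proof -
  have "sum g {p * m..<p * m + m} = (\<Sum>q<m. g (p * m + q))" for p
    using sum.shift_bounds_nat_ivl[of g 0 "p * m" m] by (simp add: atLeast0LessThan add.commute)
  then show ?thesis
    by (simp add: sum.nat_group[symmetric])
qed

lemma sum_swap_pairs:
  "(\<Sum>p\<in>P. \<Sum>p'\<in>P. \<Sum>q\<in>M. \<Sum>q'\<in>M. f p p' q q') = (\<Sum>q\<in>M. \<Sum>q'\<in>M. \<Sum>p\<in>P. \<Sum>p'\<in>P. f p p' q q')"
proof -
  have "(\<Sum>p\<in>P. \<Sum>p'\<in>P. \<Sum>q\<in>M. \<Sum>q'\<in>M. f p p' q q') = (\<Sum>p\<in>P. \<Sum>q\<in>M. \<Sum>p'\<in>P. \<Sum>q'\<in>M. f p p' q q')"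
    by (rule sum.cong[OF refl], rule sum.swap)
  also have "\<dots> = (\<Sum>p\<in>P. \<Sum>q\<in>M. \<Sum>q'\<in>M. \<Sum>p'\<in>P. f p p' q q')"
    by (rule sum.cong[OF refl], rule sum.cong[OF refl], rule sum.swap)
  also have "\<dots> = (\<Sum>q\<in>M. \<Sum>p\<in>P. \<Sum>q'\<in>M. \<Sum>p'\<in>P. f p p' q q')"
    by (rule sum.swap)
  also have "\<dots> = (\<Sum>q\<in>M. \<Sum>q'\<in>M. \<Sum>p\<in>P. \<Sum>p'\<in>P. f p p' q q')"
    by (rule sum.cong[OF refl], rule sum.swap)
  finally show ?thesis .
qed

definition kron_fun :: "nat \<Rightarrow> (nat \<Rightarrow> nat \<Rightarrow> 'a::times) \<Rightarrow> (nat \<Rightarrow> nat \<Rightarrow> 'a) \<Rightarrow> nat \<Rightarrow> nat \<Rightarrow> 'a" where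
  "kron_fun m A B i j = A (i div m) (j div m) * B (i mod m) (j mod m)"

text \<open>Schur product theorem, in Kronecker form: at \<open>x\<close> the form of \<open>A \<otimes> B\<close> is the
  Frobenius pairing of \<open>A\<close> with a partial form \<open>G\<close> of \<open>B\<close>, which is itself psd.\<close>

lemma psd_on_kron_fun:
  assumes psd_A: "psd_on {..<n} A" and psd_B: "psd_on {..<m} B"
  shows "psd_on {..<n * m} (kron_fun m A B)"
proof (rule psd_onI)
  fix i j
  assume i: "i \<in> {..<n * m}" and j: "j \<in> {..<n * m}"
  then have "m > 0"
    by (cases m) auto
  then have "i div m < n" "j div m < n" "i mod m < m" "j mod m < m"
    using i j by (auto simp: less_mult_imp_div_less)
  then show "kron_fun m A B i j = kron_fun m A B j i"
    using psd_on_sym[OF psd_A] psd_on_sym[OF psd_B] by (simp add: kron_fun_def)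
next
  fix x :: "nat \<Rightarrow> real"
  define G where "G p p' = (\<Sum>q<m. \<Sum>q'<m. x (p * m + q) * B q q' * x (p' * m + q'))" for p p'
  have "quad_form {..<n * m} (kron_fun m A B) x
      = (\<Sum>p<n. \<Sum>q<m. \<Sum>p'<n. \<Sum>q'<m. x (p * m + q) * (A p p' * B q q') * x (p' * m + q'))"
    unfolding quad_form_def sum_lessThan_mult by (simp add: kron_fun_def)
  also have "\<dots> = (\<Sum>p<n. \<Sum>p'<n. \<Sum>q<m. \<Sum>q'<m. x (p * m + q) * (A p p' * B q q') * x (p' * m + q'))"
    by (rule sum.cong[OF refl], rule sum.swap)
  also have "\<dots> = (\<Sum>p<n. \<Sum>p'<n. A p p' * G p p')"
    unfolding G_def by (simp add: sum_distrib_left mult_ac)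
  finally have frobenius: "quad_form {..<n * m} (kron_fun m A B) x = (\<Sum>p<n. \<Sum>p'<n. A p p' * G p p')" .
  have "psd_on {..<n} G"
  proof (rule psd_onI)
    fix p p'
    have "G p p' = (\<Sum>q'<m. \<Sum>q<m. x (p * m + q) * B q q' * x (p' * m + q'))"
      unfolding G_def by (rule sum.swap)
    also have "\<dots> = G p' p"
      unfolding G_def using psd_on_sym[OF psd_B] by (intro sum.cong refl) simp
    finally show "G p p' = G p' p" .
  next
    fix y :: "nat \<Rightarrow> real"
    have "quad_form {..<n} G y
        = (\<Sum>p<n. \<Sum>p'<n. \<Sum>q<m. \<Sum>q'<m. (y p * x (p * m + q)) * B q q' * (y p' * x (p' * m + q')))"
      unfolding quad_form_def G_def by (simp add: sum_distrib_left sum_distrib_right mult_ac)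
    also have "\<dots> = (\<Sum>q<m. \<Sum>q'<m. \<Sum>p<n. \<Sum>p'<n. (y p * x (p * m + q)) * B q q' * (y p' * x (p' * m + q')))"
      by (rule sum_swap_pairs)
    also have "\<dots> = quad_form {..<m} B (\<lambda>q. \<Sum>p<n. y p * x (p * m + q))"
      unfolding quad_form_def by (simp add: sum_distrib_left sum_distrib_right mult_ac)
    finally show "0 \<le> quad_form {..<n} G y"
      using psd_on_quad_form_nonneg[OF psd_B] by simp
  qed
  then show "0 \<le> quad_form {..<n * m} (kron_fun m A B) x"
    unfolding frobenius using psd_on_frobenius_nonneg[OF _ psd_A] by simp
qed

lemma psd_on_kron_fun_mono:
  assumes "psd_on {..<n} A" "psd_on {..<n} (A' - A)" "psd_on {..<m} B" "psd_on {..<m} (B' - B)"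
  shows "psd_on {..<n * m} (kron_fun m A' B' - kron_fun m A B)"
proof -
  have "psd_on {..<m} B'"
    using psd_on_add[OF assms(3,4)] by simp
  moreover have "kron_fun m A' B' - kron_fun m A B = kron_fun m (A' - A) B' + kron_fun m A (B' - B)"
    by (simp add: kron_fun_def fun_eq_iff algebra_simps)
  ultimately show ?thesis
    using assms by (simp add: psd_on_add psd_on_kron_fun)
qed

lemma psd_on_kron_fun_second_difference:
  fixes A B C D A' B' C' D' :: "nat \<Rightarrow> nat \<Rightarrow> real"
  assumes "psd_on {..<n} A" "psd_on {..<n} (B - A)" "psd_on {..<n} (C - A)"
    and "psd_on {..<n} (A + D - B - C)"
    and "psd_on {..<m} A'" "psd_on {..<m} (B' - A')" "psd_on {..<m} (C' - A')"
    and "psd_on {..<m} (A' + D' - B' - C')"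
  shows "psd_on {..<n * m}
    (kron_fun m A A' + kron_fun m D D' - kron_fun m B B' - kron_fun m C C')"
proof -
  let ?\<Delta> = "A + D - B - C" and ?\<Delta>' = "A' + D' - B' - C'"
  have "psd_on {..<m} D'"
    using psd_on_add[OF psd_on_add[OF psd_on_add[OF assms(5,6)] assms(7)] assms(8)] by simp
  moreover have "kron_fun m A A' + kron_fun m D D' - kron_fun m B B' - kron_fun m C C'
      = kron_fun m A ?\<Delta>' + kron_fun m (B - A) (C' - A') + kron_fun m (B - A) ?\<Delta>'
        + kron_fun m (C - A) (B' - A') + kron_fun m (C - A) ?\<Delta>'
        + kron_fun m ?\<Delta> D'"
    by (simp add: kron_fun_def fun_eq_iff algebra_simps)
  ultimately show ?thesis
    using assms by (simp add: psd_on_add psd_on_kron_fun)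
qed

definition entries :: "'a mat \<Rightarrow> nat \<Rightarrow> nat \<Rightarrow> 'a" where
  "entries M i j = M $$ (i, j)"

lemma scalar_prod_mult_mat_vec_eq_quad_form:
  assumes "M \<in> carrier_mat n n" "v \<in> carrier_vec n"
  shows "v \<bullet> (M *\<^sub>v v) = quad_form {..<n} (entries M) (\<lambda>i. v $ i)"
proof -
  have "v \<bullet> (M *\<^sub>v v) = (\<Sum>i<n. v $ i * (row M i \<bullet> v))"
    using assms by (simp add: scalar_prod_def atLeast0LessThan)
  also have "\<dots> = (\<Sum>i<n. v $ i * (\<Sum>j<n. M $$ (i, j) * v $ j))"
    using assms by (intro sum.cong refl) (simp add: scalar_prod_def atLeast0LessThan)
  also have "\<dots> = quad_form {..<n} (entries M) (\<lambda>i. v $ i)"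
    unfolding quad_form_def entries_def by (simp add: sum_distrib_left mult.assoc)
  finally show ?thesis .
qed

lemma psd_iff_psd_on_entries:
  assumes M: "M \<in> carrier_mat n n"
  shows "psd M \<longleftrightarrow> psd_on {..<n} (entries M)"
proof
  assume psd: "psd M"
  show "psd_on {..<n} (entries M)"
  proof (rule psd_onI)
    fix i j
    assume "i \<in> {..<n}" "j \<in> {..<n}"
    then have "transpose_mat M $$ (i, j) = M $$ (j, i)"
      using M by simp
    then show "entries M i j = entries M j i"
      using psd unfolding psd_def entries_def by simp
  next
    fix x
    have "vec n x \<bullet> (M *\<^sub>v vec n x) = quad_form {..<n} (entries M) x"
      using scalar_prod_mult_mat_vec_eq_quad_form[OF M] unfolding quad_form_def by simp
    then show "0 \<le> quad_form {..<n} (entries M) x"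
      using psd M unfolding psd_def by (metis carrier_matD(1) vec_carrier)
  qed
next
  assume psd: "psd_on {..<n} (entries M)"
  have "transpose_mat M = M"
  proof (rule eq_matI)
    fix i j
    assume "i < dim_row M" "j < dim_col M"
    then show "transpose_mat M $$ (i, j) = M $$ (i, j)"
      using M psd_on_sym[OF psd, of i j] by (simp add: entries_def)
  qed (use M in auto)
  then show "psd M"
    using M psd_on_quad_form_nonneg[OF psd] scalar_prod_mult_mat_vec_eq_quad_form[OF M]
    unfolding psd_def by auto
qed

lemma loewner_le_iff_psd_on_entries:
  assumes "A \<in> carrier_mat n n" "B \<in> carrier_mat n n"
  shows "loewner_le A B \<longleftrightarrow> psd_on {..<n} (entries B - entries A)"
proof -
  have "B - A \<in> carrier_mat n n"
    using assms(1) by (rule minus_carrier_mat)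
  then have "loewner_le A B \<longleftrightarrow> psd_on {..<n} (entries (B - A))"
    using assms psd_iff_psd_on_entries[of "B - A" n] unfolding loewner_le_def by auto
  also have "\<dots> \<longleftrightarrow> psd_on {..<n} (entries B - entries A)"
    using assms by (intro psd_on_cong) (simp add: entries_def)
  finally show ?thesis .
qed

lemma loewner_le_add_iff_psd_on_entries:
  assumes "A \<in> carrier_mat n n" "B \<in> carrier_mat n n" "C \<in> carrier_mat n n" "D \<in> carrier_mat n n"
  shows "loewner_le (A + B) (C + D) \<longleftrightarrow> psd_on {..<n} (entries C + entries D - entries A - entries B)"
proof -
  have "loewner_le (A + B) (C + D) \<longleftrightarrow> psd_on {..<n} (entries (C + D) - entries (A + B))"
    using assms by (intro loewner_le_iff_psd_on_entries) auto
  also have "\<dots> \<longleftrightarrow> psd_on {..<n} (entries C + entries D - entries A - entries B)"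
    using assms by (intro psd_on_cong) (simp add: entries_def)
  finally show ?thesis .
qed

lemma psd_one_mat: "psd (1\<^sub>m n)"
proof -
  have "0 \<le> v \<bullet> v" for v :: "real vec"
    using conjugate_square_ge_0_vec[of v] by simp
  then show ?thesis
    unfolding psd_def by simp
qed

lemma kron_carrier_mat:
  "A \<in> carrier_mat n n \<Longrightarrow> B \<in> carrier_mat m m \<Longrightarrow> kron A B \<in> carrier_mat (n * m) (n * m)"
  unfolding kron_def carrier_mat_def by auto

lemma entries_kron:
  assumes "A \<in> carrier_mat n n" "B \<in> carrier_mat m m" "i < n * m" "j < n * m"
  shows "entries (kron A B) i j = kron_fun m (entries A) (entries B) i j"
  using assms by (simp add: kron_def entries_def kron_fun_def)

definition psd_monotone_supermodular :: "nat \<Rightarrow> nat \<Rightarrow> (real mat \<Rightarrow> real mat) \<Rightarrow> bool" where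
  "psd_monotone_supermodular N n F \<longleftrightarrow>
    (\<forall>X \<in> carrier_mat N N. F X \<in> carrier_mat n n) \<and>
    (\<forall>X \<in> carrier_mat N N. \<forall>Y \<in> carrier_mat N N. \<forall>Z \<in> carrier_mat N N. psd X \<longrightarrow> psd Y \<longrightarrow> psd Z \<longrightarrow>
      psd (F X) \<and> loewner_le (F X) (F (X + Y)) \<and>
      loewner_le (F (X + Y) + F (X + Z)) (F X + F (X + Y + Z)))"

lemma psd_monotone_supermodularI:
  assumes "\<And>X. X \<in> carrier_mat N N \<Longrightarrow> F X \<in> carrier_mat n n"
    and "\<And>X Y Z. X \<in> carrier_mat N N \<Longrightarrow> Y \<in> carrier_mat N N \<Longrightarrow> Z \<in> carrier_mat N N \<Longrightarrow>
      psd X \<Longrightarrow> psd Y \<Longrightarrow> psd Z \<Longrightarrow>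
      psd (F X) \<and> loewner_le (F X) (F (X + Y)) \<and>
      loewner_le (F (X + Y) + F (X + Z)) (F X + F (X + Y + Z))"
  shows "psd_monotone_supermodular N n F"
  using assms unfolding psd_monotone_supermodular_def by blast

lemma psd_monotone_supermodular_carrier:
  "psd_monotone_supermodular N n F \<Longrightarrow> X \<in> carrier_mat N N \<Longrightarrow> F X \<in> carrier_mat n n"
  unfolding psd_monotone_supermodular_def by blast

lemma psd_monotone_supermodular_loewner_le:
  "psd_monotone_supermodular N n F \<Longrightarrow> X \<in> carrier_mat N N \<Longrightarrow> Y \<in> carrier_mat N N \<Longrightarrow>
    Z \<in> carrier_mat N N \<Longrightarrow> psd X \<Longrightarrow> psd Y \<Longrightarrow> psd Z \<Longrightarrow>
    loewner_le (F (X + Y) + F (X + Z)) (F X + F (X + Y + Z))"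
  unfolding psd_monotone_supermodular_def by blast

lemma psd_monotone_supermodular_entries:
  assumes F: "psd_monotone_supermodular N n F"
    and carrier: "X \<in> carrier_mat N N" "Y \<in> carrier_mat N N" "Z \<in> carrier_mat N N"
    and psd: "psd X" "psd Y" "psd Z"
  shows "psd_on {..<n} (entries (F X))"
    and "psd_on {..<n} (entries (F (X + Y)) - entries (F X))"
    and "psd_on {..<n} (entries (F X) + entries (F (X + Y + Z)) - entries (F (X + Y)) - entries (F (X + Z)))"
proof -
  have "F A \<in> carrier_mat n n" if "A \<in> carrier_mat N N" for A
    using psd_monotone_supermodular_carrier[OF F that] .
  then show "psd_on {..<n} (entries (F X))"
      and "psd_on {..<n} (entries (F (X + Y)) - entries (F X))"
      and "psd_on {..<n} (entries (F X) + entries (F (X + Y + Z)) - entries (F (X + Y)) - entries (F (X + Z)))"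
    using F carrier psd unfolding psd_monotone_supermodular_def
    by (simp_all add: psd_iff_psd_on_entries[symmetric] loewner_le_iff_psd_on_entries[symmetric]
        loewner_le_add_iff_psd_on_entries[symmetric])
qed

lemma psd_monotone_supermodular_id: "psd_monotone_supermodular N N (\<lambda>X. X)"
proof (rule psd_monotone_supermodularI)
  fix X Y Z :: "real mat"
  assume carrier: "X \<in> carrier_mat N N" "Y \<in> carrier_mat N N" "Z \<in> carrier_mat N N"
    and psd: "psd X" "psd Y" "psd Z"
  have "psd_on {..<N} (entries (X + Y) - entries X) \<longleftrightarrow> psd_on {..<N} (entries Y)"
    using carrier by (intro psd_on_cong) (simp add: entries_def)
  then have "loewner_le X (X + Y)"
    using carrier psd by (simp add: loewner_le_iff_psd_on_entries psd_iff_psd_on_entries)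
  moreover have "psd_on {..<N} (entries X + entries (X + Y + Z) - entries (X + Y) - entries (X + Z))
      \<longleftrightarrow> psd_on {..<N} 0"
    using carrier by (intro psd_on_cong) (simp add: entries_def)
  then have "loewner_le (X + Y + (X + Z)) (X + (X + Y + Z))"
    using carrier psd_on_zero by (subst loewner_le_add_iff_psd_on_entries) auto
  ultimately show "psd X \<and> loewner_le X (X + Y) \<and> loewner_le (X + Y + (X + Z)) (X + (X + Y + Z))"
    using psd by blast
qed

lemma psd_monotone_supermodular_const:
  assumes "C \<in> carrier_mat n n" "psd C"
  shows "psd_monotone_supermodular N n (\<lambda>_. C)"
  using assms psd_on_zero
  by (intro psd_monotone_supermodularI)
    (simp_all add: loewner_le_iff_psd_on_entries loewner_le_add_iff_psd_on_entries)

lemma psd_monotone_supermodular_kron: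
  assumes F: "psd_monotone_supermodular N n F" and G: "psd_monotone_supermodular N m G"
  shows "psd_monotone_supermodular N (n * m) (\<lambda>X. kron (F X) (G X))"
proof -
  have carrier_F: "F X \<in> carrier_mat n n" and carrier_G: "G X \<in> carrier_mat m m"
    if "X \<in> carrier_mat N N" for X
    using psd_monotone_supermodular_carrier[OF F that] psd_monotone_supermodular_carrier[OF G that] .
  then have carrier_FG: "kron (F X) (G X) \<in> carrier_mat (n * m) (n * m)" if "X \<in> carrier_mat N N" for X
    using that by (simp add: kron_carrier_mat)
  have entries_FG: "entries (kron (F X) (G X)) i j = kron_fun m (entries (F X)) (entries (G X)) i j"
    if "X \<in> carrier_mat N N" "i \<in> {..<n * m}" "j \<in> {..<n * m}" for X i j
    using entries_kron[OF carrier_F[OF that(1)] carrier_G[OF that(1)]] that(2,3) by simp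
  show ?thesis
  proof (rule psd_monotone_supermodularI)
    fix X Y Z :: "real mat"
    assume carrier: "X \<in> carrier_mat N N" "Y \<in> carrier_mat N N" "Z \<in> carrier_mat N N"
      and psd: "psd X" "psd Y" "psd Z"
    note F_XYZ = psd_monotone_supermodular_entries[OF F carrier psd]
      and F_XZY = psd_monotone_supermodular_entries[OF F carrier(1,3,2) psd(1,3,2)]
      and G_XYZ = psd_monotone_supermodular_entries[OF G carrier psd]
      and G_XZY = psd_monotone_supermodular_entries[OF G carrier(1,3,2) psd(1,3,2)]
    have sums: "X + Y \<in> carrier_mat N N" "X + Z \<in> carrier_mat N N" "X + Y + Z \<in> carrier_mat N N"
      using carrier by simp_all
    have "psd (kron (F X) (G X)) \<longleftrightarrow> psd_on {..<n * m} (kron_fun m (entries (F X)) (entries (G X)))"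
      unfolding psd_iff_psd_on_entries[OF carrier_FG[OF carrier(1)]]
      using carrier by (intro psd_on_cong) (simp add: entries_FG)
    moreover have "loewner_le (kron (F X) (G X)) (kron (F (X + Y)) (G (X + Y))) \<longleftrightarrow>
        psd_on {..<n * m} (kron_fun m (entries (F (X + Y))) (entries (G (X + Y)))
          - kron_fun m (entries (F X)) (entries (G X)))"
      unfolding loewner_le_iff_psd_on_entries[OF carrier_FG carrier_FG, OF carrier(1) sums(1)]
      using carrier sums by (intro psd_on_cong) (simp add: entries_FG)
    moreover have "loewner_le (kron (F (X + Y)) (G (X + Y)) + kron (F (X + Z)) (G (X + Z)))
        (kron (F X) (G X) + kron (F (X + Y + Z)) (G (X + Y + Z))) \<longleftrightarrow>
        psd_on {..<n * m} (kron_fun m (entries (F X)) (entries (G X))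
          + kron_fun m (entries (F (X + Y + Z))) (entries (G (X + Y + Z)))
          - kron_fun m (entries (F (X + Y))) (entries (G (X + Y)))
          - kron_fun m (entries (F (X + Z))) (entries (G (X + Z))))"
      unfolding loewner_le_add_iff_psd_on_entries[OF carrier_FG carrier_FG carrier_FG carrier_FG,
          OF sums(1,2) carrier(1) sums(3)]
      using carrier sums by (intro psd_on_cong) (simp add: entries_FG)
    ultimately show "psd (kron (F X) (G X)) \<and> loewner_le (kron (F X) (G X)) (kron (F (X + Y)) (G (X + Y))) \<and>
      loewner_le (kron (F (X + Y)) (G (X + Y)) + kron (F (X + Z)) (G (X + Z)))
        (kron (F X) (G X) + kron (F (X + Y + Z)) (G (X + Y + Z)))"
      using psd_on_kron_fun[OF F_XYZ(1) G_XYZ(1)] psd_on_kron_fun_mono[OF F_XYZ(1,2) G_XYZ(1,2)]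
        psd_on_kron_fun_second_difference[OF F_XYZ(1,2) F_XZY(2) F_XYZ(3) G_XYZ(1,2) G_XZY(2) G_XYZ(3)]
      by blast
  qed (fact carrier_FG)
qed

lemma psd_monotone_supermodular_kron_pow: "psd_monotone_supermodular N (N ^ k) (\<lambda>X. kron_pow X k)"
proof (induction k)
  case 0
  show ?case
    using psd_monotone_supermodular_const[OF one_carrier_mat psd_one_mat] by simp
next
  case (Suc k)
  show ?case
    using psd_monotone_supermodular_kron[OF psd_monotone_supermodular_id Suc.IH] by simp
qed

theorem lemma5p9:
  fixes k l N :: nat and X Y Z V :: "real mat"
  assumes "X \<in> carrier_mat N N" "Y \<in> carrier_mat N N"
    and "Z \<in> carrier_mat N N" "V \<in> carrier_mat N N"
    and "psd X" "psd Y" "psd Z" "psd V"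
  shows "loewner_le
    (kron (kron (kron_pow (X + Y) k) V) (kron_pow (X + Y) l)
      + kron (kron (kron_pow (X + Z) k) V) (kron_pow (X + Z) l))
    (kron (kron (kron_pow X k) V) (kron_pow X l)
      + kron (kron (kron_pow (X + Y + Z) k) V) (kron_pow (X + Y + Z) l))"
proof -
  have "psd_monotone_supermodular N (N ^ k * N * N ^ l) (\<lambda>A. kron (kron (kron_pow A k) V) (kron_pow A l))"
    using assms(4,8)
    by (intro psd_monotone_supermodular_kron psd_monotone_supermodular_kron_pow
        psd_monotone_supermodular_const)
  from psd_monotone_supermodular_loewner_le[OF this assms(1-3,5-7)] show ?thesis .
qed

end
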